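(* Let $N\ge 2$, $n\ge1$, and let $\rho$ be a density matrix on $\mathbb{C}^N$. Then, computing $\mathcal{C}$ on the $N^{2n}$-dimensional space $(\mathbb{C}^N)^{\otimes 2n}$, $$\mathcal{C}(\rho^{\otimes n}\otimes\mathcal{I}^{\otimes n})\le n\,\frac{S(\rho)+\log_2 N}{2\log_2 N}\,D(\rho,\mathcal{I})= n\left(\frac{\mathcal{C}(\rho)}{2}+\frac{D(\rho,\mathcal{I})}{2}\right)\le n\left(\frac{\mathcal{C}(\rho)}{2}+\frac12\right).$$
   Context: For a density matrix $\rho$ (positive semidefinite, trace one) on an $N$-dimensional Hilbert space, $\mathcal{I}=\mathbb{I}/N$ is the normalized maximally mixed state. The von Neumann entropy is $S(\rho)=-\mathrm{Tr}[\rho\log_2\rho]$, and $D(\rho,\sigma)=\tfrac12\|\rho-\sigma\|_1$ is the trace distance. The Quantum Statistical Complexity Measure is $\mathcal{C}(\rho)=\frac{1}{\log_2 M}\,S(\rho)\,D(\rho,\mathbb{I}/M)$ for a state on an $M$-dimensional space. *)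

theory Defs
  imports "Jordan_Normal_Form.Char_Poly" "Jordan_Normal_Form.Schur_Decomposition"
begin

(* The order is irrelevant for
   everything below, since only symmetric sums over this list are used. *)
definition eigvals :: "complex mat \<Rightarrow> complex list" where
  "eigvals A = (SOME as. char_poly A = (\<Prod>a\<leftarrow>as. [:- a, 1:]) \<and> length as = dim_row A)"

definition mat_trace :: "complex mat \<Rightarrow> complex" where
  "mat_trace A = (\<Sum>i<dim_row A. A $$ (i, i))"

definition density_matrix :: "nat \<Rightarrow> complex mat \<Rightarrow> bool" where
  "density_matrix N \<rho> \<longleftrightarrow>
     \<rho> \<in> carrier_mat N N \<and>
     mat_adjoint \<rho> = \<rho> \<and>
     (\<forall>v \<in> carrier_vec N. Im (conjugate v \<bullet> (\<rho> *\<^sub>v v)) = 0 \<and> 0 \<le> Re (conjugate v \<bullet> (\<rho> *\<^sub>v v))) \<and>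
     mat_trace \<rho> = 1"

definition max_mixed :: "nat \<Rightarrow> complex mat" where
  "max_mixed N = (1 / of_nat N) \<cdot>\<^sub>m 1\<^sub>m N"

(* von Neumann entropy S(rho) = - Tr[rho log2 rho] = - sum_i l_i log2 l_i over the
   eigenvalues l_i of rho (with 0 log 0 = 0) *)
definition vn_entropy :: "complex mat \<Rightarrow> real" where
  "vn_entropy \<rho> = - (\<Sum>l\<leftarrow>eigvals \<rho>. (if Re l = 0 then 0 else Re l * log 2 (Re l)))"

(* trace norm ||A||_1 = Tr sqrt(A^* A) = sum of singular values of A *)
definition trace_norm :: "complex mat \<Rightarrow> real" where
  "trace_norm A = (\<Sum>m\<leftarrow>eigvals (mat_adjoint A * A). sqrt (Re m))"

definition trace_dist :: "complex mat \<Rightarrow> complex mat \<Rightarrow> real" where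
  "trace_dist \<rho> \<sigma> = trace_norm (\<rho> - \<sigma>) / 2"

definition qsc :: "complex mat \<Rightarrow> real" where
  "qsc \<rho> = (let M = dim_row \<rho> in
      vn_entropy \<rho> * trace_dist \<rho> (max_mixed M) / log 2 (real M))"

definition kron :: "complex mat \<Rightarrow> complex mat \<Rightarrow> complex mat" where
  "kron A B = mat (dim_row A * dim_row B) (dim_col A * dim_col B)
     (\<lambda>(i, j). A $$ (i div dim_row B, j div dim_col B) * B $$ (i mod dim_row B, j mod dim_col B))"

fun kron_pow :: "complex mat \<Rightarrow> nat \<Rightarrow> complex mat" where
  "kron_pow A 0 = 1\<^sub>m 1"
| "kron_pow A (Suc n) = kron A (kron_pow A n)"

end

theory Submission
  imports Defs
begin

text \<open>
  Everything is read off spectra. By Schur triangularisation a density matrix \<open>\<rho>\<close> is similar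
  to a triangular matrix whose diagonal is a probability vector \<open>p\<close>, and Kronecker products of
  triangularisations are triangularisations. Since \<open>\<I>\<^sup>\<otimes>\<^sup>n = \<I>\<close> on the
  \<open>N\<^sup>n\<close>-dimensional space, \<open>\<rho>\<^sup>\<otimes>\<^sup>n \<otimes> \<I>\<^sup>\<otimes>\<^sup>n\<close> has spectrum
  \<open>p\<^sup>\<otimes>\<^sup>n \<otimes> u\<close> with \<open>u\<close> uniform, and as \<open>\<I>\<close> is scalar, the trace distance of a
  Hermitian state to \<open>\<I>\<close> is half the \<open>\<ell>\<^sub>1\<close>-distance of its spectrum to the uniform vector.
  Shannon entropy is additive on products, giving \<open>S = n (S(\<rho>) + log N)\<close>, while
  \<open>|x y - a b| \<le> |x - a| y + a |y - b|\<close> gives \<open>D \<le> n D(\<rho>, \<I>)\<close>. Dividing by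
  \<open>log N\<^sup>2\<^sup>n = 2 n log N\<close> yields the inequality; the rest is algebra and
  \<open>D(\<rho>, \<I>) \<le> 1\<close>.
\<close>

section \<open>Product distributions\<close>

definition kron_list :: "'a::times list \<Rightarrow> 'a list \<Rightarrow> 'a list" where
  "kron_list xs ys = concat (map (\<lambda>x. map ((*) x) ys) xs)"

fun kron_pow_list :: "'a::monoid_mult list \<Rightarrow> nat \<Rightarrow> 'a list" where
  "kron_pow_list xs 0 = [1]"
| "kron_pow_list xs (Suc k) = kron_list xs (kron_pow_list xs k)"

definition prob_vec :: "real list \<Rightarrow> bool" where
  "prob_vec p \<longleftrightarrow> (\<forall>x\<in>set p. 0 \<le> x) \<and> sum_list p = 1"

definition shannon_entropy :: "real list \<Rightarrow> real" where
  "shannon_entropy p = - (\<Sum>x\<leftarrow>p. x * log 2 x)"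

definition abs_dev :: "real list \<Rightarrow> real \<Rightarrow> real" where
  "abs_dev p c = (\<Sum>x\<leftarrow>p. \<bar>x - c\<bar>)"

lemma length_kron_list [simp]: "length (kron_list xs ys) = length xs * length ys"
  by (induct xs) (auto simp: kron_list_def)

lemma length_kron_pow_list [simp]: "length (kron_pow_list xs k) = length xs ^ k"
  by (induct k) auto

lemma sum_list_map_kron_list:
  "(\<Sum>z\<leftarrow>kron_list xs ys. f z) = (\<Sum>x\<leftarrow>xs. \<Sum>y\<leftarrow>ys. f (x * y))"
  by (induct xs) (auto simp: kron_list_def comp_def)

lemma map_of_real_kron_list:
  "map of_real (kron_list xs ys) = kron_list (map of_real xs) (map of_real ys)"
  by (simp add: kron_list_def map_concat comp_def)

lemma map_of_real_kron_pow_list: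
  "map of_real (kron_pow_list xs k) = kron_pow_list (map of_real xs) k"
  by (induct k) (simp_all add: map_of_real_kron_list)

lemma prob_vec_kron_list:
  assumes p: "prob_vec p" and q: "prob_vec q"
  shows "prob_vec (kron_list p q)"
proof -
  have "sum_list (kron_list p q) = (\<Sum>x\<leftarrow>p. x * sum_list q)"
    using sum_list_map_kron_list[of "\<lambda>z. z" p q] by (simp add: sum_list_const_mult)
  with assms show ?thesis
    by (auto simp: prob_vec_def kron_list_def)
qed

lemma prob_vec_kron_pow_list: "prob_vec p \<Longrightarrow> prob_vec (kron_pow_list p k)"
  by (induct k) (simp add: prob_vec_def, simp add: prob_vec_kron_list)

lemma prob_vec_uniform: "M > 0 \<Longrightarrow> prob_vec (replicate M (1 / real M))"
  by (simp add: prob_vec_def sum_list_replicate)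

lemma mult_log_mult:
  fixes x y :: real
  assumes "0 \<le> x" "0 \<le> y"
  shows "x * y * log 2 (x * y) = x * (y * log 2 y) + y * (x * log 2 x)"
proof (cases "x = 0 \<or> y = 0")
  case False
  with assms show ?thesis by (simp add: log_mult algebra_simps)
qed auto

lemma shannon_entropy_kron_list:
  assumes p: "prob_vec p" and q: "prob_vec q"
  shows "shannon_entropy (kron_list p q) = shannon_entropy p + shannon_entropy q"
proof -
  have "(\<Sum>y\<leftarrow>q. x * y * log 2 (x * y)) = - x * shannon_entropy q + x * log 2 x"
    if "x \<in> set p" for x
  proof -
    have "(\<Sum>y\<leftarrow>q. x * y * log 2 (x * y)) = (\<Sum>y\<leftarrow>q. x * (y * log 2 y) + y * (x * log 2 x))"
      using that p q by (intro arg_cong[where f = sum_list] map_cong) (auto simp: prob_vec_def mult_log_mult)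
    with q show ?thesis
      by (simp add: sum_list_addf sum_list_const_mult sum_list_mult_const shannon_entropy_def prob_vec_def)
  qed
  then have "(\<Sum>z\<leftarrow>kron_list p q. z * log 2 z) = (\<Sum>x\<leftarrow>p. - x * shannon_entropy q + x * log 2 x)"
    by (simp add: sum_list_map_kron_list cong: map_cong)
  with p show ?thesis
    by (simp add: shannon_entropy_def sum_list_addf sum_list_mult_const prob_vec_def)
qed

lemma shannon_entropy_kron_pow_list:
  "prob_vec p \<Longrightarrow> shannon_entropy (kron_pow_list p k) = real k * shannon_entropy p"
  by (induct k) (simp add: shannon_entropy_def,
      simp add: shannon_entropy_kron_list prob_vec_kron_pow_list algebra_simps)

lemma shannon_entropy_uniform:
  "M > 0 \<Longrightarrow> shannon_entropy (replicate M (1 / real M)) = log 2 (real M)"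
  by (simp add: shannon_entropy_def sum_list_replicate log_divide)

lemma shannon_entropy_nonneg:
  assumes "prob_vec p"
  shows "0 \<le> shannon_entropy p"
proof -
  have "x * log 2 x \<le> 0" if "x \<in> set p" for x
  proof -
    have "0 \<le> x" using assms that by (simp add: prob_vec_def)
    moreover have "x \<le> 1"
      using assms member_le_sum_list[OF that] by (simp add: prob_vec_def)
    ultimately show ?thesis by (cases "x = 0") (simp_all add: mult_nonneg_nonpos)
  qed
  then have "(\<Sum>x\<leftarrow>p. x * log 2 x) \<le> 0" by (intro sum_list_nonpos) auto
  then show ?thesis by (simp add: shannon_entropy_def)
qed

lemma abs_mult_sub_le:
  fixes x y a b :: real
  assumes "0 \<le> y" "0 \<le> a"
  shows "\<bar>x * y - a * b\<bar> \<le> \<bar>x - a\<bar> * y + a * \<bar>y - b\<bar>"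
proof -
  have "\<bar>x * y - a * b\<bar> = \<bar>(x - a) * y + a * (y - b)\<bar>" by (simp add: algebra_simps)
  also have "\<dots> \<le> \<bar>(x - a) * y\<bar> + \<bar>a * (y - b)\<bar>" by (rule abs_triangle_ineq)
  finally show ?thesis using assms by (simp add: abs_mult)
qed

lemma abs_dev_kron_list_le:
  assumes q: "prob_vec q" and a: "0 \<le> a"
  shows "abs_dev (kron_list p q) (a * b) \<le> abs_dev p a + a * real (length p) * abs_dev q b"
proof -
  have "(\<Sum>y\<leftarrow>q. \<bar>x * y - a * b\<bar>) \<le> \<bar>x - a\<bar> + a * abs_dev q b" for x
  proof -
    have "(\<Sum>y\<leftarrow>q. \<bar>x * y - a * b\<bar>) \<le> (\<Sum>y\<leftarrow>q. \<bar>x - a\<bar> * y + a * \<bar>y - b\<bar>)"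
      using q a by (intro sum_list_mono abs_mult_sub_le) (auto simp: prob_vec_def)
    with q show ?thesis
      by (simp add: sum_list_addf sum_list_const_mult abs_dev_def prob_vec_def)
  qed
  then have "abs_dev (kron_list p q) (a * b) \<le> (\<Sum>x\<leftarrow>p. \<bar>x - a\<bar> + a * abs_dev q b)"
    unfolding abs_dev_def sum_list_map_kron_list by (intro sum_list_mono) (simp add: abs_dev_def)
  then show ?thesis
    by (simp add: sum_list_addf abs_dev_def sum_list_triv mult_ac)
qed

lemma abs_dev_kron_pow_list_le:
  assumes "prob_vec p" "length p = N" "N > 0"
  shows "abs_dev (kron_pow_list p k) (1 / real N ^ k) \<le> real k * abs_dev p (1 / real N)"
proof (induct k)
  case (Suc k)
  have "abs_dev (kron_pow_list p (Suc k)) (1 / real N ^ Suc k)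
      = abs_dev (kron_list p (kron_pow_list p k)) (1 / real N * (1 / real N ^ k))"
    by simp
  also have "\<dots> \<le> abs_dev p (1 / real N)
      + 1 / real N * real (length p) * abs_dev (kron_pow_list p k) (1 / real N ^ k)"
    by (rule abs_dev_kron_list_le[OF prob_vec_kron_pow_list[OF assms(1)]]) simp
  also have "\<dots> = abs_dev p (1 / real N) + abs_dev (kron_pow_list p k) (1 / real N ^ k)"
    using assms(2,3) by simp
  also have "\<dots> \<le> real (Suc k) * abs_dev p (1 / real N)"
    using Suc by (simp add: algebra_simps)
  finally show ?case .
qed (simp add: abs_dev_def)

lemma abs_dev_le:
  assumes "prob_vec p" "0 \<le> c"
  shows "abs_dev p c \<le> 1 + real (length p) * c"
proof -
  have "abs_dev p c \<le> (\<Sum>x\<leftarrow>p. x + c)"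
    unfolding abs_dev_def using assms by (intro sum_list_mono) (auto simp: prob_vec_def)
  with assms show ?thesis by (simp add: sum_list_addf sum_list_triv prob_vec_def)
qed

section \<open>Kronecker products of matrices\<close>

lemma dim_mat_adjoint [simp]:
  "dim_row (mat_adjoint A) = dim_col A" "dim_col (mat_adjoint A) = dim_row A"
  unfolding mat_adjoint_def by auto

lemma index_mat_adjoint [simp]:
  "i < dim_col A \<Longrightarrow> j < dim_row A \<Longrightarrow> mat_adjoint A $$ (i, j) = conjugate (A $$ (j, i))"
  unfolding mat_adjoint_def by (simp add: mat_of_rows_index)

lemma dim_kron [simp]:
  "dim_row (kron A B) = dim_row A * dim_row B" "dim_col (kron A B) = dim_col A * dim_col B"
  unfolding kron_def by auto

lemma index_kron:
  "i < dim_row A * dim_row B \<Longrightarrow> j < dim_col A * dim_col B \<Longrightarrow>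
   kron A B $$ (i, j) = A $$ (i div dim_row B, j div dim_col B) * B $$ (i mod dim_row B, j mod dim_col B)"
  unfolding kron_def by auto

lemma mult_add_less_mult:
  fixes a b x y :: nat
  assumes "x < a" "y < b"
  shows "x * b + y < a * b"
proof -
  have "x * b + y < Suc x * b" using assms(2) by simp
  also have "\<dots> \<le> a * b" using assms(1) by (intro mult_le_mono1) simp
  finally show ?thesis .
qed

lemma div_mod_less_mult:
  fixes i a b :: nat
  assumes "i < a * b"
  shows "i div b < a" "i mod b < b"
proof -
  have "0 < b" using assms by (cases b) auto
  with assms show "i div b < a" "i mod b < b" by (simp_all add: less_mult_imp_div_less)
qed

lemma sum_lessThan_mult: "(\<Sum>k<a * b. f k) = (\<Sum>x<a. \<Sum>y<b. f (x * b + y :: nat))"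
  by (simp add: sum.nat_group[symmetric] sum.atLeastLessThan_shift_0 atLeast0LessThan comp_def)

lemma index_mult_mat_sum:
  "i < dim_row A \<Longrightarrow> j < dim_col B \<Longrightarrow> dim_col A = dim_row B \<Longrightarrow>
   (A * B) $$ (i, j) = (\<Sum>k<dim_col A. A $$ (i, k) * B $$ (k, j))"
  by (simp add: scalar_prod_def lessThan_atLeast0)

lemma kron_mult:
  assumes "dim_col A = dim_row C" "dim_col B = dim_row D"
  shows "kron A B * kron C D = kron (A * C) (B * D)"
proof (rule eq_matI)
  fix i j
  assume "i < dim_row (kron (A * C) (B * D))" "j < dim_col (kron (A * C) (B * D))"
  then have i: "i < dim_row A * dim_row B" and j: "j < dim_col C * dim_col D" by auto
  let ?b = "dim_col B"
  have "(kron A B * kron C D) $$ (i, j)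
      = (\<Sum>k<dim_col (kron A B). kron A B $$ (i, k) * kron C D $$ (k, j))"
    by (rule index_mult_mat_sum) (use i j assms in auto)
  also have "\<dots> = (\<Sum>x<dim_col A. \<Sum>y<?b. kron A B $$ (i, x * ?b + y) * kron C D $$ (x * ?b + y, j))"
    by (simp add: sum_lessThan_mult)
  also have "\<dots> = (\<Sum>x<dim_col A. \<Sum>y<?b.
      (A $$ (i div dim_row B, x) * C $$ (x, j div dim_col D)) *
      (B $$ (i mod dim_row B, y) * D $$ (y, j mod dim_col D)))"
    using i j assms
    by (intro sum.cong refl) (simp add: index_kron mult_add_less_mult mult_ac flip: assms)
  also have "\<dots> = (\<Sum>x<dim_col A. A $$ (i div dim_row B, x) * C $$ (x, j div dim_col D)) *
      (\<Sum>y<?b. B $$ (i mod dim_row B, y) * D $$ (y, j mod dim_col D))"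
    by (simp add: sum_product)
  also have "\<dots> = kron (A * C) (B * D) $$ (i, j)"
    using i j assms
    by (simp add: index_kron div_mod_less_mult index_mult_mat_sum del: index_mult_mat(1))
  finally show "(kron A B * kron C D) $$ (i, j) = kron (A * C) (B * D) $$ (i, j)" .
qed (use assms in auto)

lemma kron_smult_one:
  "kron (a \<cdot>\<^sub>m 1\<^sub>m n) (b \<cdot>\<^sub>m 1\<^sub>m m) = (a * b) \<cdot>\<^sub>m 1\<^sub>m (n * m)"
proof (rule eq_matI)
  fix i j
  assume "i < dim_row ((a * b) \<cdot>\<^sub>m 1\<^sub>m (n * m))" "j < dim_col ((a * b) \<cdot>\<^sub>m 1\<^sub>m (n * m))"
  then have ij: "i < n * m" "j < n * m" by auto
  have "i = j \<longleftrightarrow> i div m = j div m \<and> i mod m = j mod m"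
    by (metis div_mult_mod_eq)
  with ij show "kron (a \<cdot>\<^sub>m 1\<^sub>m n) (b \<cdot>\<^sub>m 1\<^sub>m m) $$ (i, j) = ((a * b) \<cdot>\<^sub>m 1\<^sub>m (n * m)) $$ (i, j)"
    by (simp add: index_kron div_mod_less_mult)
qed auto

lemma one_smult_one_mat [simp]: "(1 :: 'a :: semiring_1) \<cdot>\<^sub>m 1\<^sub>m n = 1\<^sub>m n"
  by (rule eq_matI) auto

lemma kron_one: "kron (1\<^sub>m n) (1\<^sub>m m) = 1\<^sub>m (n * m)"
  using kron_smult_one[of 1 n 1 m] by simp

lemma kron_pow_max_mixed: "kron_pow (max_mixed N) k = max_mixed (N ^ k)"
proof (induct k)
  case 0
  show ?case by (simp add: max_mixed_def)
next
  case (Suc k)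
  then show ?case by (simp add: max_mixed_def kron_smult_one)
qed

lemma kron_upper_triangular:
  assumes "T \<in> carrier_mat n n" "S \<in> carrier_mat m m" "upper_triangular T" "upper_triangular S"
  shows "upper_triangular (kron T S)"
proof (rule upper_triangularI)
  fix i j
  assume ji: "j < i" and "i < dim_row (kron T S)"
  then have i: "i < n * m" and j: "j < n * m" using assms(1,2) by auto
  have "j div m \<le> i div m" using ji by (simp add: div_le_mono)
  moreover have "j mod m < i mod m" if "j div m = i div m"
  proof -
    have "i div m * m + j mod m = j" using that div_mult_mod_eq[of j m] by simp
    also note ji
    also have "i = i div m * m + i mod m" by simp
    finally show ?thesis by (rule add_less_imp_less_left)
  qed
  ultimately consider "j div m < i div m" | "j div m = i div m" "j mod m < i mod m"
    by (cases "j div m = i div m") auto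
  then have "T $$ (i div m, j div m) = 0 \<or> S $$ (i mod m, j mod m) = 0"
  proof cases
    case 1
    show ?thesis
      using upper_triangularD[OF assms(3) 1] assms(1) div_mod_less_mult(1)[OF i] by simp
  next
    case 2
    show ?thesis
      using upper_triangularD[OF assms(4) 2(2)] assms(2) div_mod_less_mult(2)[OF i] by simp
  qed
  with i j assms(1,2) show "kron T S $$ (i, j) = 0" by (auto simp: index_kron)
qed

lemma map_upt_mult:
  "map f [0..<a * b] = concat (map (\<lambda>x. map (\<lambda>y. f (x * b + y)) [0..<b]) [0..<a])"
proof (induct a)
  case (Suc a)
  have "[0..<Suc a * b] = [0..<a * b] @ [a * b..<a * b + b]"
    using upt_add_eq_append[of 0 "a * b" b] by (simp add: add.commute)
  moreover have "map f [a * b..<a * b + b] = map (\<lambda>y. f (a * b + y)) [0..<b]"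
    by (rule nth_equalityI) auto
  ultimately show ?case using Suc by simp
qed simp

lemma diag_mat_kron:
  assumes "T \<in> carrier_mat n n" "S \<in> carrier_mat m m"
  shows "diag_mat (kron T S) = kron_list (diag_mat T) (diag_mat S)"
proof -
  have "diag_mat (kron T S)
      = concat (map (\<lambda>x. map (\<lambda>y. kron T S $$ (x * m + y, x * m + y)) [0..<m]) [0..<n])"
    using assms by (simp add: diag_mat_def map_upt_mult)
  also have "\<dots> = concat (map (\<lambda>x. map (\<lambda>y. T $$ (x, x) * S $$ (y, y)) [0..<m]) [0..<n])"
    using assms
    by (intro arg_cong[where f = concat] map_cong refl) (simp add: index_kron mult_add_less_mult)
  finally show ?thesis
    using assms by (simp add: kron_list_def diag_mat_def map_concat comp_def)
qed

lemma mat_adjoint_kron: "mat_adjoint (kron A B) = kron (mat_adjoint A) (mat_adjoint B)"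
  by (rule eq_matI) (auto simp: index_kron div_mod_less_mult)

lemma mat_adjoint_kron_pow: "mat_adjoint A = A \<Longrightarrow> mat_adjoint (kron_pow A k) = kron_pow A k"
proof (induct k)
  case 0
  show ?case by (rule eq_matI) auto
qed (simp add: mat_adjoint_kron)

lemma mat_adjoint_max_mixed: "mat_adjoint (max_mixed N) = max_mixed N"
  unfolding max_mixed_def by (rule eq_matI) auto

section \<open>Triangularisation and spectra\<close>

definition similar_upper_triangular :: "complex mat \<Rightarrow> complex list \<Rightarrow> bool" where
  "similar_upper_triangular A ds \<longleftrightarrow>
     (\<exists>T P Q. similar_mat_wit A T P Q \<and> upper_triangular T \<and> diag_mat T = ds)"

lemma similar_upper_triangular_exists:
  assumes "A \<in> carrier_mat n n"
  obtains ds where "similar_upper_triangular A ds"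
proof -
  obtain es where es: "char_poly A = (\<Prod>a\<leftarrow>es. [:- a, 1:])"
    using char_poly_factorized[OF assms] by blast
  obtain B P Q where "schur_decomposition A es = (B, P, Q)"
    by (cases "schur_decomposition A es") auto
  from schur_decomposition[OF assms es this] show ?thesis
    using that unfolding similar_upper_triangular_def by blast
qed

lemma upper_triangular_similar_diag:
  "T \<in> carrier_mat n n \<Longrightarrow> upper_triangular T \<Longrightarrow> similar_upper_triangular T (diag_mat T)"
  unfolding similar_upper_triangular_def using similar_mat_wit_refl by blast

lemma similar_upper_triangular_max_mixed:
  "similar_upper_triangular (max_mixed N) (map of_real (replicate N (1 / real N)))"
proof -
  have "diag_mat (max_mixed N) = map of_real (replicate N (1 / real N))"
    by (rule nth_equalityI) (auto simp: diag_mat_def max_mixed_def)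
  then show ?thesis
    using upper_triangular_similar_diag[of "max_mixed N" N]
    by (auto simp: max_mixed_def upper_triangular_def)
qed

lemma similar_upper_triangular_char_poly:
  assumes "similar_upper_triangular A ds"
  shows "char_poly A = (\<Prod>a\<leftarrow>ds. [:- a, 1:])" "length ds = dim_row A"
    "A \<in> carrier_mat (dim_row A) (dim_row A)"
proof -
  obtain T P Q where wit: "similar_mat_wit A T P Q" "upper_triangular T" "diag_mat T = ds"
    using assms unfolding similar_upper_triangular_def by blast
  note dims = similar_mat_witD[OF refl wit(1)]
  have "char_poly A = char_poly T"
    using wit(1) by (intro char_poly_similar) (auto simp: similar_mat_def)
  then show "char_poly A = (\<Prod>a\<leftarrow>ds. [:- a, 1:])"
    using char_poly_upper_triangular[OF dims(5) wit(2)] wit(3) by simp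
  show "length ds = dim_row A" using wit(3) dims(5) by (auto simp: diag_mat_def)
  show "A \<in> carrier_mat (dim_row A) (dim_row A)" using dims(4) .
qed

lemma degree_linear_factors: "degree (\<Prod>a\<leftarrow>as. [:- a, 1:]) = length (as :: complex list)"
proof (induct as)
  case (Cons a as)
  have "(\<Prod>a\<leftarrow>as. [:- a, 1:]) \<noteq> 0" by (auto simp: prod_list_zero_iff)
  with Cons have "degree ([:- a, 1:] * (\<Prod>a\<leftarrow>as. [:- a, 1:])) = 1 + length as"
    by (subst degree_mult_eq) auto
  then show ?case by simp
qed simp

lemma prod_list_map_mset_eq:
  "mset xs = mset ys \<Longrightarrow> (\<Prod>x\<leftarrow>xs. f x) = (\<Prod>y\<leftarrow>ys. (f y :: 'a::comm_monoid_mult))"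
  by (metis mset_map prod_mset_prod_list)

lemma sum_list_map_mset_eq:
  "mset xs = mset ys \<Longrightarrow> (\<Sum>x\<leftarrow>xs. f x) = (\<Sum>y\<leftarrow>ys. (f y :: 'a::comm_monoid_add))"
  by (metis mset_map sum_mset_sum_list)

lemma linear_factors_eq_imp_mset_eq:
  "(\<Prod>a\<leftarrow>xs. [:- a, 1:]) = (\<Prod>a\<leftarrow>ys. [:- a, 1:]) \<Longrightarrow> mset xs = mset (ys :: complex list)"
proof (induct xs arbitrary: ys)
  case Nil
  then show ?case using degree_linear_factors[of ys] by simp
next
  case (Cons x xs ys)
  have "poly (\<Prod>a\<leftarrow>ys. [:- a, 1:]) x = 0" unfolding Cons(2)[symmetric] by simp
  then have "x \<in> set ys" by (auto simp: poly_prod_list prod_list_zero_iff)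
  then have ys: "mset ys = mset (x # remove1 x ys)" by simp
  then have "(\<Prod>a\<leftarrow>ys. [:- a, 1:]) = (\<Prod>a\<leftarrow>x # remove1 x ys. [:- a, 1:])"
    by (rule prod_list_map_mset_eq)
  with Cons(2) have "[:- x, 1:] * (\<Prod>a\<leftarrow>xs. [:- a, 1:]) = [:- x, 1:] * (\<Prod>a\<leftarrow>remove1 x ys. [:- a, 1:])"
    by simp
  then have "(\<Prod>a\<leftarrow>xs. [:- a, 1:]) = (\<Prod>a\<leftarrow>remove1 x ys. [:- a, 1:])"
    by (rule mult_left_cancel[THEN iffD1, rotated]) simp
  from Cons(1)[OF this] have "mset (x # xs) = mset (x # remove1 x ys)"
    by (simp del: mset_remove1)
  from trans[OF this ys[symmetric]] show ?case .
qed

lemma mset_eigvals: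
  assumes "similar_upper_triangular A ds"
  shows "mset (eigvals A) = mset ds"
proof -
  note char = similar_upper_triangular_char_poly[OF assms]
  have "\<exists>as. char_poly A = (\<Prod>a\<leftarrow>as. [:- a, 1:]) \<and> length as = dim_row A"
    using char(1,2) by blast
  then have "char_poly A = (\<Prod>a\<leftarrow>eigvals A. [:- a, 1:])"
    unfolding eigvals_def by (rule someI_ex[THEN conjunct1])
  with char(1) show ?thesis by (intro linear_factors_eq_imp_mset_eq) simp
qed

lemma sum_list_map_eigvals:
  fixes f :: "complex \<Rightarrow> 'a::comm_monoid_add"
  assumes "similar_upper_triangular A ds"
  shows "(\<Sum>l\<leftarrow>eigvals A. f l) = (\<Sum>l\<leftarrow>ds. f l)"
  using mset_eigvals[OF assms] by (rule sum_list_map_mset_eq)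

lemma mat_trace_mult_comm:
  assumes "A \<in> carrier_mat n n" "B \<in> carrier_mat n n"
  shows "mat_trace (A * B) = mat_trace (B * A)"
proof -
  have "mat_trace (A * B) = (\<Sum>i<n. \<Sum>k<n. A $$ (i, k) * B $$ (k, i))"
    unfolding mat_trace_def using assms
    by (intro sum.cong) (auto simp: index_mult_mat_sum simp del: index_mult_mat(1))
  also have "\<dots> = (\<Sum>k<n. \<Sum>i<n. B $$ (k, i) * A $$ (i, k))"
    by (subst sum.swap) (simp add: mult.commute)
  also have "\<dots> = mat_trace (B * A)"
    unfolding mat_trace_def using assms
    by (intro sum.cong) (auto simp: index_mult_mat_sum simp del: index_mult_mat(1))
  finally show ?thesis .
qed

lemma mat_trace_similar_upper_triangular:
  assumes "similar_upper_triangular A ds"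
  shows "mat_trace A = sum_list ds"
proof -
  obtain T P Q where wit: "similar_mat_wit A T P Q" "upper_triangular T" "diag_mat T = ds"
    using assms unfolding similar_upper_triangular_def by blast
  define n where "n = dim_row A"
  note w = similar_mat_witD[OF n_def wit(1)]
  have "mat_trace A = mat_trace ((P * T) * Q)" using w by simp
  also have "\<dots> = mat_trace (Q * (P * T))"
    using w by (intro mat_trace_mult_comm[of _ n]) auto
  also have "Q * (P * T) = (Q * P) * T"
    using w by (simp add: assoc_mult_mat[symmetric, of Q n n P n T n])
  also have "\<dots> = T" using w by simp
  also have "mat_trace T = sum_list (diag_mat T)"
    using w(5) by (simp add: mat_trace_def diag_mat_def lessThan_atLeast0
        flip: sum_set_upt_conv_sum_list_nat)
  finally show ?thesis using wit(3) by simp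
qed

lemma similar_upper_triangular_kron:
  assumes A: "similar_upper_triangular A ds" and B: "similar_upper_triangular B es"
  shows "similar_upper_triangular (kron A B) (kron_list ds es)"
proof -
  obtain T1 P1 Q1 where 1: "similar_mat_wit A T1 P1 Q1" "upper_triangular T1" "diag_mat T1 = ds"
    using A unfolding similar_upper_triangular_def by blast
  obtain T2 P2 Q2 where 2: "similar_mat_wit B T2 P2 Q2" "upper_triangular T2" "diag_mat T2 = es"
    using B unfolding similar_upper_triangular_def by blast
  define n where "n = dim_row A"
  define m where "m = dim_row B"
  note w1 = similar_mat_witD[OF n_def 1(1)] and w2 = similar_mat_witD[OF m_def 2(1)]
  have "similar_mat_wit (kron A B) (kron T1 T2) (kron P1 P2) (kron Q1 Q2)"
  proof (rule similar_mat_witI[of _ _ "n * m"])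
    have "kron A B = kron (P1 * T1) (P2 * T2) * kron Q1 Q2"
      using w1 w2 by (simp add: kron_mult)
    also have "\<dots> = kron P1 P2 * kron T1 T2 * kron Q1 Q2"
      using w1 w2 by (simp add: kron_mult)
    finally show "kron A B = kron P1 P2 * kron T1 T2 * kron Q1 Q2" .
  qed (use w1 w2 in \<open>auto simp: kron_mult kron_one\<close>)
  moreover have "upper_triangular (kron T1 T2)"
    using kron_upper_triangular w1 w2 1 2 by blast
  moreover have "diag_mat (kron T1 T2) = kron_list ds es"
    using diag_mat_kron w1 w2 1 2 by metis
  ultimately show ?thesis unfolding similar_upper_triangular_def by blast
qed

lemma similar_upper_triangular_kron_pow:
  assumes "similar_upper_triangular A ds"
  shows "similar_upper_triangular (kron_pow A k) (kron_pow_list ds k)"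
proof (induct k)
  case 0
  show ?case using upper_triangular_similar_diag[of "1\<^sub>m 1" 1] by simp
next
  case (Suc k)
  then show ?case by (simp add: similar_upper_triangular_kron[OF assms])
qed

lemma similar_upper_triangular_minus_scalar:
  assumes "similar_upper_triangular A ds"
  shows "similar_upper_triangular (A - c \<cdot>\<^sub>m 1\<^sub>m (dim_row A)) (map (\<lambda>d. d - c) ds)"
proof -
  obtain T P Q where wit: "similar_mat_wit A T P Q" "upper_triangular T" "diag_mat T = ds"
    using assms unfolding similar_upper_triangular_def by blast
  define n where "n = dim_row A"
  note w = similar_mat_witD[OF n_def wit(1)]
  have "P * (T - c \<cdot>\<^sub>m 1\<^sub>m n) = P * T - c \<cdot>\<^sub>m P"
    using w by (simp add: mult_minus_distrib_mat[of _ n n] mult_smult_distrib[OF w(6) one_carrier_mat])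
  then have "P * (T - c \<cdot>\<^sub>m 1\<^sub>m n) * Q = P * T * Q - c \<cdot>\<^sub>m (P * Q)"
    using w by (simp add: minus_mult_distrib_mat[of _ n n] mult_smult_assoc_mat[OF w(6) w(7)])
  then have "similar_mat_wit (A - c \<cdot>\<^sub>m 1\<^sub>m n) (T - c \<cdot>\<^sub>m 1\<^sub>m n) P Q"
    using w by (intro similar_mat_witI[of _ _ n]) auto
  moreover have "upper_triangular (T - c \<cdot>\<^sub>m 1\<^sub>m n)"
    using wit(2) w by (auto simp: upper_triangular_def)
  moreover have "diag_mat (T - c \<cdot>\<^sub>m 1\<^sub>m n) = map (\<lambda>d. d - c) ds"
    using w wit(3) by (intro nth_equalityI) (auto simp: diag_mat_def)
  ultimately show ?thesis unfolding similar_upper_triangular_def n_def by blast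
qed

lemma upper_triangular_mult:
  assumes "T \<in> carrier_mat n n" "S \<in> carrier_mat n n" "upper_triangular T" "upper_triangular S"
  shows "upper_triangular (T * S)"
    and "diag_mat (T * S) = map2 (*) (diag_mat T) (diag_mat S)"
proof -
  have prod: "(T * S) $$ (i, j) = (\<Sum>k<n. T $$ (i, k) * S $$ (k, j))" if "i < n" "j < n" for i j
    using assms that by (simp add: index_mult_mat_sum del: index_mult_mat(1))
  have T0: "T $$ (i, k) = 0" if "k < i" "i < n" for i k
    using upper_triangularD[OF assms(3) that(1)] that(2) assms(1) by simp
  have S0: "S $$ (k, j) = 0" if "j < k" "k < n" for j k
    using upper_triangularD[OF assms(4) that(1)] that(2) assms(2) by simp
  show "upper_triangular (T * S)"
  proof (rule upper_triangularI)
    fix i j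
    assume ji: "j < i" and "i < dim_row (T * S)"
    then have i: "i < n" using assms(1) by simp
    have "T $$ (i, k) * S $$ (k, j) = 0" if "k < n" for k
      using T0[of k i] S0[of j k] that ji i by (cases "k < i") auto
    with ji i show "(T * S) $$ (i, j) = 0" by (simp add: prod)
  qed
  have "(T * S) $$ (i, i) = T $$ (i, i) * S $$ (i, i)" if i: "i < n" for i
  proof -
    have "(T * S) $$ (i, i) = (\<Sum>k<n. if k = i then T $$ (i, i) * S $$ (i, i) else 0)"
      unfolding prod[OF i i]
    proof (rule sum.cong)
      fix k
      assume "k \<in> {..<n}"
      then show "T $$ (i, k) * S $$ (k, i) = (if k = i then T $$ (i, i) * S $$ (i, i) else 0)"
        using T0[of k i] S0[of i k] i by (cases k i rule: linorder_cases) auto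
    qed simp
    with i show ?thesis by simp
  qed
  then show "diag_mat (T * S) = map2 (*) (diag_mat T) (diag_mat S)"
    using assms by (intro nth_equalityI) (auto simp: diag_mat_def)
qed

lemma similar_upper_triangular_square:
  assumes "similar_upper_triangular A ds"
  shows "similar_upper_triangular (A * A) (map (\<lambda>d. d * d) ds)"
proof -
  obtain T P Q where wit: "similar_mat_wit A T P Q" "upper_triangular T" "diag_mat T = ds"
    using assms unfolding similar_upper_triangular_def by blast
  define n where "n = dim_row A"
  note w = similar_mat_witD[OF n_def wit(1)]
  have "A ^\<^sub>m 2 = P * T ^\<^sub>m 2 * Q" by (rule similar_mat_wit_pow_id[OF wit(1)])
  moreover have "A ^\<^sub>m 2 = A * A" "T ^\<^sub>m 2 = T * T"
    using w(4,5) by (simp_all add: numeral_2_eq_2)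
  ultimately have "similar_mat_wit (A * A) (T * T) P Q"
    using w by (intro similar_mat_witI[of _ _ n]) auto
  moreover have "diag_mat (T * T) = map (\<lambda>d. d * d) ds"
    using upper_triangular_mult(2)[OF w(5) w(5) wit(2) wit(2)] wit(3)
    by (simp add: zip_same_conv_map comp_def)
  ultimately show ?thesis
    using upper_triangular_mult(1)[OF w(5) w(5) wit(2) wit(2)]
    unfolding similar_upper_triangular_def by blast
qed

section \<open>Spectral formulas for entropy and trace distance\<close>

lemma vn_entropy_eq_shannon_entropy:
  assumes "similar_upper_triangular A (map of_real p)"
  shows "vn_entropy A = shannon_entropy p"
proof -
  have xlogx: "(if x = 0 then 0 else x * log 2 x) = x * log 2 x" for x :: real
    by simp
  show ?thesis
    unfolding vn_entropy_def shannon_entropy_def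
      sum_list_map_eigvals[OF assms, of "\<lambda>l. if Re l = 0 then 0 else Re l * log 2 (Re l)"]
    by (simp add: comp_def xlogx)
qed

lemma trace_dist_max_mixed_eq_abs_dev:
  assumes A: "A \<in> carrier_mat n n" and herm: "mat_adjoint A = A"
    and tri: "similar_upper_triangular A (map of_real p)"
  shows "trace_dist A (max_mixed n) = abs_dev p (1 / real n) / 2"
proof -
  define c where "c = 1 / real n"
  define M where "M = A - of_real c \<cdot>\<^sub>m 1\<^sub>m n"
  have herm_M: "mat_adjoint M = M"
  proof (rule eq_matI)
    fix i j
    assume "i < dim_row M" "j < dim_col M"
    then have ij: "i < n" "j < n" using A by (auto simp: M_def)
    have "conjugate (A $$ (j, i)) = A $$ (i, j)"
      using index_mat_adjoint[of i A j] herm A ij by simp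
    with A ij show "mat_adjoint M $$ (i, j) = M $$ (i, j)" by (simp add: M_def)
  qed (use A in \<open>simp_all add: M_def\<close>)
  have "similar_upper_triangular M (map (\<lambda>x. of_real (x - c)) p)"
    using similar_upper_triangular_minus_scalar[OF tri, of "of_real c"] A
    by (simp add: M_def comp_def)
  from similar_upper_triangular_square[OF this]
  have "similar_upper_triangular (mat_adjoint M * M) (map (\<lambda>x. of_real ((x - c)\<^sup>2)) p)"
    by (simp add: herm_M comp_def power2_eq_square)
  from sum_list_map_eigvals[OF this, of "\<lambda>m. sqrt (Re m)"]
  have "trace_norm M = abs_dev p c"
    by (simp add: trace_norm_def abs_dev_def comp_def)
  moreover have "max_mixed n = of_real c \<cdot>\<^sub>m 1\<^sub>m n" by (simp add: max_mixed_def c_def)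
  ultimately show ?thesis by (simp add: trace_dist_def M_def c_def)
qed

lemma density_matrix_eigenvalue_nonneg:
  assumes dm: "density_matrix N \<rho>" and tri: "similar_upper_triangular \<rho> ds" and d: "d \<in> set ds"
  shows "Im d = 0 \<and> 0 \<le> Re d"
proof -
  have \<rho>: "\<rho> \<in> carrier_mat N N"
    and psd: "\<And>v. v \<in> carrier_vec N \<Longrightarrow>
      Im (conjugate v \<bullet> (\<rho> *\<^sub>v v)) = 0 \<and> 0 \<le> Re (conjugate v \<bullet> (\<rho> *\<^sub>v v))"
    using dm unfolding density_matrix_def by blast+
  have "poly (char_poly \<rho>) d = 0"
    using similar_upper_triangular_char_poly(1)[OF tri] d by (auto simp: poly_prod_list prod_list_zero_iff)
  then have "eigenvalue \<rho> d" using eigenvalue_root_char_poly[OF \<rho>] by simp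
  then obtain v where v: "v \<in> carrier_vec N" "v \<noteq> 0\<^sub>v N" "\<rho> *\<^sub>v v = d \<cdot>\<^sub>v v"
    using \<rho> unfolding eigenvalue_def eigenvector_def by auto
  define s where "s = conjugate v \<bullet> v"
  have "s = v \<bullet>c v" unfolding s_def by (rule conjugate_vec_sprod_comm[OF v(1) v(1), symmetric])
  then have s: "Im s = 0" "Re s > 0"
    using conjugate_square_ge_0_vec[of v] conjugate_square_eq_0_vec[OF v(1)] v(2)
    by (auto simp: less_eq_complex_def complex_eq_iff)
  have "conjugate v \<bullet> (\<rho> *\<^sub>v v) = d * s" unfolding v(3) s_def using v(1) by simp
  with psd[OF v(1)] s(1) have "Im d * Re s = 0" "0 \<le> Re d * Re s" by simp_all
  with s(2) show ?thesis by (simp add: zero_le_mult_iff)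
qed

lemma density_matrix_spectrum:
  assumes dm: "density_matrix N \<rho>"
  obtains p where "similar_upper_triangular \<rho> (map of_real p)" "prob_vec p" "length p = N"
proof -
  have \<rho>: "\<rho> \<in> carrier_mat N N" and tr: "mat_trace \<rho> = 1"
    using dm unfolding density_matrix_def by auto
  obtain ds where tri: "similar_upper_triangular \<rho> ds"
    using similar_upper_triangular_exists[OF \<rho>] by blast
  note eig = density_matrix_eigenvalue_nonneg[OF dm tri]
  define p where "p = map Re ds"
  have ds: "ds = map of_real p"
    using eig by (intro nth_equalityI) (auto simp: p_def complex_eq_iff)
  show ?thesis
  proof (rule that)
    show "similar_upper_triangular \<rho> (map of_real p)" using tri by (simp flip: ds)
    have "sum_list p = Re (mat_trace \<rho>)"
      unfolding mat_trace_similar_upper_triangular[OF tri] ds by (induct p) simp_all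
    with tr eig show "prob_vec p" by (auto simp: prob_vec_def p_def)
    show "length p = N"
      using similar_upper_triangular_char_poly(2)[OF tri] \<rho> by (simp add: p_def)
  qed
qed

section \<open>The product state \<open>\<rho>\<^sup>\<otimes>\<^sup>n \<otimes> \<I>\<^sup>\<otimes>\<^sup>n\<close>\<close>

lemma product_state_entropy_trace_dist:
  fixes n :: nat
  assumes dm: "density_matrix N \<rho>" and N: "N > 0"
  defines "\<sigma> \<equiv> kron (kron_pow \<rho> n) (kron_pow (max_mixed N) n)"
  shows "dim_row \<sigma> = N ^ n * N ^ n"
    and "vn_entropy \<sigma> = real n * (vn_entropy \<rho> + log 2 (real N))"
    and "trace_dist \<sigma> (max_mixed (N ^ n * N ^ n)) \<le> real n * trace_dist \<rho> (max_mixed N)"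
proof -
  obtain p where tri: "similar_upper_triangular \<rho> (map of_real p)" and p: "prob_vec p"
    and len: "length p = N"
    using density_matrix_spectrum[OF dm] .
  have \<rho>: "\<rho> \<in> carrier_mat N N" and herm: "mat_adjoint \<rho> = \<rho>"
    using dm unfolding density_matrix_def by auto
  let ?M = "N ^ n"
  let ?u = "replicate ?M (1 / real ?M)"
  let ?q = "kron_list (kron_pow_list p n) ?u"
  have M: "?M > 0" using N by simp
  have \<sigma>_eq: "\<sigma> = kron (kron_pow \<rho> n) (max_mixed ?M)"
    unfolding \<sigma>_def kron_pow_max_mixed ..
  have tri_\<sigma>: "similar_upper_triangular \<sigma> (map of_real ?q)"
    unfolding \<sigma>_eq map_of_real_kron_list map_of_real_kron_pow_list
    by (intro similar_upper_triangular_kron similar_upper_triangular_kron_pow tri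
        similar_upper_triangular_max_mixed)
  have dim: "dim_row \<sigma> = ?M * ?M"
    using similar_upper_triangular_char_poly(2)[OF tri_\<sigma>] len by simp
  then show "dim_row \<sigma> = N ^ n * N ^ n" .
  have \<sigma>: "\<sigma> \<in> carrier_mat (?M * ?M) (?M * ?M)"
    using similar_upper_triangular_char_poly(3)[OF tri_\<sigma>] by (simp only: dim)
  have "vn_entropy \<sigma> = shannon_entropy ?q"
    by (rule vn_entropy_eq_shannon_entropy[OF tri_\<sigma>])
  also have "\<dots> = shannon_entropy (kron_pow_list p n) + shannon_entropy ?u"
    using M by (intro shannon_entropy_kron_list prob_vec_kron_pow_list p prob_vec_uniform)
  also have "\<dots> = real n * shannon_entropy p + log 2 (real ?M)"
    using M by (simp only: shannon_entropy_kron_pow_list[OF p] shannon_entropy_uniform)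
  also have "\<dots> = real n * (vn_entropy \<rho> + log 2 (real N))"
    using vn_entropy_eq_shannon_entropy[OF tri] N by (simp add: log_nat_power algebra_simps)
  finally show "vn_entropy \<sigma> = real n * (vn_entropy \<rho> + log 2 (real N))" .
  have herm_\<sigma>: "mat_adjoint \<sigma> = \<sigma>"
    unfolding \<sigma>_def by (simp add: mat_adjoint_kron mat_adjoint_kron_pow herm mat_adjoint_max_mixed)
  have "abs_dev ?q (1 / real ?M * (1 / real ?M))
      \<le> abs_dev (kron_pow_list p n) (1 / real ?M)
        + 1 / real ?M * real (length (kron_pow_list p n)) * abs_dev ?u (1 / real ?M)"
    using M by (intro abs_dev_kron_list_le prob_vec_uniform) simp_all
  also have "\<dots> \<le> real n * abs_dev p (1 / real N)"
    using abs_dev_kron_pow_list_le[OF p len N, of n] by (simp add: abs_dev_def sum_list_replicate)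
  finally show "trace_dist \<sigma> (max_mixed (N ^ n * N ^ n)) \<le> real n * trace_dist \<rho> (max_mixed N)"
    unfolding trace_dist_max_mixed_eq_abs_dev[OF \<sigma> herm_\<sigma> tri_\<sigma>]
      trace_dist_max_mixed_eq_abs_dev[OF \<rho> herm tri]
    by simp
qed

lemma density_matrix_entropy_nonneg:
  assumes "density_matrix N \<rho>"
  shows "0 \<le> vn_entropy \<rho>"
proof -
  obtain p where "similar_upper_triangular \<rho> (map of_real p)" "prob_vec p"
    using density_matrix_spectrum[OF assms] by blast
  then show ?thesis by (simp add: vn_entropy_eq_shannon_entropy shannon_entropy_nonneg)
qed

lemma density_matrix_trace_dist_le_one:
  assumes dm: "density_matrix N \<rho>" and N: "N > 0"
  shows "trace_dist \<rho> (max_mixed N) \<le> 1"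
proof -
  obtain p where tri: "similar_upper_triangular \<rho> (map of_real p)" and p: "prob_vec p"
    and len: "length p = N"
    using density_matrix_spectrum[OF dm] .
  have "\<rho> \<in> carrier_mat N N" "mat_adjoint \<rho> = \<rho>"
    using dm unfolding density_matrix_def by auto
  then have "trace_dist \<rho> (max_mixed N) = abs_dev p (1 / real N) / 2"
    using tri by (rule trace_dist_max_mixed_eq_abs_dev)
  also have "\<dots> \<le> 1"
    using abs_dev_le[OF p, of "1 / real N"] len N by simp
  finally show ?thesis .
qed

theorem mainTheorem6:
  fixes N n :: nat and \<rho> :: "complex mat"
  assumes "N \<ge> 2" and "n \<ge> 1" and "density_matrix N \<rho>"
  shows "qsc (kron (kron_pow \<rho> n) (kron_pow (max_mixed N) n))
           \<le> real n * ((vn_entropy \<rho> + log 2 (real N)) / (2 * log 2 (real N)))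
                 * trace_dist \<rho> (max_mixed N)
      \<and> real n * ((vn_entropy \<rho> + log 2 (real N)) / (2 * log 2 (real N)))
                 * trace_dist \<rho> (max_mixed N)
         = real n * (qsc \<rho> / 2 + trace_dist \<rho> (max_mixed N) / 2)
      \<and> real n * (qsc \<rho> / 2 + trace_dist \<rho> (max_mixed N) / 2)
         \<le> real n * (qsc \<rho> / 2 + 1 / 2)"
proof -
  define \<sigma> where "\<sigma> = kron (kron_pow \<rho> n) (kron_pow (max_mixed N) n)"
  define S where "S = vn_entropy \<rho>"
  define D where "D = trace_dist \<rho> (max_mixed N)"
  define D\<sigma> where "D\<sigma> = trace_dist \<sigma> (max_mixed (N ^ n * N ^ n))"
  define l where "l = log 2 (real N)"
  have N: "N > 0" and l: "l > 0" and n: "real n > 0"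
    using assms(1,2) unfolding l_def by simp_all
  note \<sigma> = product_state_entropy_trace_dist[OF assms(3) N, where n = n, folded \<sigma>_def]
  have "log 2 (real (dim_row \<sigma>)) = 2 * real n * l"
    using N unfolding \<sigma>(1) l_def by (simp add: log_mult log_nat_power)
  with \<sigma>(1,2) have "qsc \<sigma> = real n * (S + l) * D\<sigma> / (2 * real n * l)"
    unfolding qsc_def S_def D\<sigma>_def l_def by simp
  also have "\<dots> = (S + l) / (2 * l) * D\<sigma>"
    using n by simp
  also have "\<dots> \<le> (S + l) / (2 * l) * (real n * D)"
    using \<sigma>(3) density_matrix_entropy_nonneg[OF assms(3)] l
    unfolding S_def D_def D\<sigma>_def by (intro mult_left_mono) simp_all
  finally have "qsc \<sigma> \<le> real n * ((S + l) / (2 * l)) * D" by (simp add: algebra_simps)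
  moreover have "dim_row \<rho> = N" using assms(3) unfolding density_matrix_def by auto
  then have "real n * ((S + l) / (2 * l)) * D = real n * (qsc \<rho> / 2 + D / 2)"
    using l unfolding qsc_def S_def D_def l_def by (simp add: field_simps)
  moreover have "real n * (qsc \<rho> / 2 + D / 2) \<le> real n * (qsc \<rho> / 2 + 1 / 2)"
    using density_matrix_trace_dist_le_one[OF assms(3) N] unfolding D_def
    by (intro mult_left_mono) simp_all
  ultimately show ?thesis unfolding \<sigma>_def S_def D_def l_def by simp
qed

end
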